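(* Assume the standing hypotheses (H) of the context. Take $x,y\in B(x_0,R)$ and $0\le t<v<R$. If $\|x-x_0\|\le t$ and $\|y-x\|\le v-t$, then $$\lambda\|E_f(x,y)\|\le e_\psi(t,v)\frac{\|y-x\|^2}{(v-t)^2}\le\frac12\psi''(v)(v-t)^2,$$ where $E_f(x,y):=f(y)-[f(x)+f'(x)(y-x)]$ and $e_\psi(t,u):=\psi(u)-[\psi(t)+\psi'(t)(u-t)]$.
   Context: Standing hypotheses (H): $\mathbb X,\mathbb Y$ Banach spaces, $\Omega\subseteq\mathbb X$ open, $f:\Omega\to\mathbb Y$ continuous with continuous Fréchet derivative $f'$, $F:\mathbb X\rightrightarrows\mathbb Y$ with closed graph; $L_f(x,y):=f(x)+f'(x)(y-x)+F(y)$, $L_f(x,z)^{-1}:=\{y: z\in f(x)+f'(x)(y-x)+F(y)\}$, singletons $\{w\}$ identified with $w$. $x_0,x_1\in\Omega$, $\lambda>0$, and $0\in f(x_0)+f'(x_0)(x_1-x_0)+F(x_1)$ with $z\mapsto L_f(x_0,z)^{-1}\cap B(x_1,\rho_1)$ single-valued from some $B(0,\rho_2)$ into $B(x_1,\rho_1)\subset\Omega$ and $\lambda$-Lipschitz there (strong regularity). Constants $r_{x_1},r_0,r_{x_0}>0$ satisfy: for each $x\in B(x_0,r_{x_0})$, $\lambda\|f'(x)-f'(x_0)\|<1$, $z\mapsto L_f(x,z)^{-1}\cap B(x_1,r_{x_1})$ is single-valued from $B(0,r_0)$ to $B(x_1,r_{x_1})$ and Lipschitz with constant $\lambda/(1-\lambda\|f'(x)-f'(x_0)\|)$.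 $R>0$, $\kappa:=\sup\{t\in[0,R):B(x_0,t)\subset\Omega\}$, $\psi:[0,R)\to\mathbb R$ twice continuously differentiable with $\lambda\|f'(y)-f'(x)\|\le\psi'(\|y-x\|+\|x-x_0\|)-\psi'(\|x-x_0\|)$ for $x,y\in B(x_0,\kappa)$, $\|y-x\|+\|x-x_0\|<R$; $\|x_1-x_0\|\le\psi(0)$; $\psi(0)>0$, $\psi'(0)=-1$; $\psi'$ convex and strictly increasing; $\psi$ has a zero in $(0,R)$ and $t_*:=\min\{t\in[0,R):\psi(t)=0\}$; $t_*\le r_{x_0}$ and $\psi''(t_* )\psi(0)^2/(2\lambda)<r_0$.
   Formalization: The points x and y range over $B(x_0,\kappa)$ instead of $B(x_0,R)$, where kappa is the supremum defined in the context. The statement above fails without it. *)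

theory Defs
  imports "HOL-Analysis.Analysis"
begin

definition Lf_inv :: "('a::banach \<Rightarrow> 'b::banach) \<Rightarrow> ('a \<Rightarrow> 'a \<Rightarrow>\<^sub>L 'b) \<Rightarrow> ('a \<Rightarrow> 'b set)
    \<Rightarrow> 'a \<Rightarrow> 'b \<Rightarrow> 'a set" where
  "Lf_inv f f' F x z = {y. \<exists>w\<in>F y. z = f x + blinfun_apply (f' x) (y - x) + w}"

definition Ef :: "('a::banach \<Rightarrow> 'b::banach) \<Rightarrow> ('a \<Rightarrow> 'a \<Rightarrow>\<^sub>L 'b) \<Rightarrow> 'a \<Rightarrow> 'a \<Rightarrow> 'b" where
  "Ef f f' x y = f y - (f x + blinfun_apply (f' x) (y - x))"

definition epsi :: "(real \<Rightarrow> real) \<Rightarrow> (real \<Rightarrow> real) \<Rightarrow> real \<Rightarrow> real \<Rightarrow> real" where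
  "epsi \<psi> \<psi>' t u = \<psi> u - (\<psi> t + \<psi>' t * (u - t))"

end

theory Submission
  imports Defs
begin

text \<open>Along the segment \<open>x + \<tau>(y - x)\<close>, the majorant condition together with the convexity of
  \<open>\<psi>'\<close> (increments of a convex function grow when shifted to the right and are dominated by the
  secant) gives \<open>\<lambda>\<parallel>f'(x + \<tau>(y - x)) - f'(x)\<parallel> \<le> c (\<psi>'(t + \<tau>(v - t)) - \<psi>'(t))\<close> with
  \<open>c = \<parallel>y - x\<parallel>/(v - t)\<close>; the mean-value comparison inequality turns this into the first bound.
  The second one follows from \<open>c \<le> 1\<close> and \<open>0 \<le> e\<^sub>\<psi>(t,v) \<le> \<psi>''(v)(v - t)\<^sup>2/2\<close>, where the
  upper bound holds because \<open>\<psi>''\<close> is nondecreasing, \<open>\<psi>'\<close> being convex.\<close>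

lemma convex_on_increment_le_secant:
  fixes h :: "real \<Rightarrow> real"
  assumes h: "convex_on I h" and I: "t \<in> I" "t + w \<in> I" and uw: "0 \<le> u" "u \<le> w" "0 < w"
  shows "h (t + u) - h t \<le> u / w * (h (t + w) - h t)"
proof -
  have "h ((1 - u/w) *\<^sub>R t + (u/w) *\<^sub>R (t + w)) \<le> (1 - u/w) * h t + u/w * h (t + w)"
    using uw by (intro convex_onD[OF h _ _ I]) auto
  moreover have "(1 - u/w) *\<^sub>R t + (u/w) *\<^sub>R (t + w) = t + u"
    using uw by (simp add: field_simps)
  ultimately show ?thesis by (simp add: algebra_simps)
qed

lemma convex_on_increment_mono:
  fixes h :: "real \<Rightarrow> real"
  assumes h: "convex_on I h" and I: "a \<in> I" "t + u \<in> I" and at: "a \<le> t" and u: "0 \<le> u"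
  shows "h (a + u) - h a \<le> h (t + u) - h t"
proof (cases "a < t")
  case True
  define w where "w = t + u - a"
  have I': "a + w \<in> I" using I by (simp add: w_def)
  have w: "w > 0" using True u by (simp add: w_def)
  have "h (a + u) - h a \<le> u / w * (h (t + u) - h a)"
    using convex_on_increment_le_secant[OF h I(1) I', of u] w at u by (simp add: w_def)
  moreover have "h t - h a \<le> (t - a) / w * (h (t + u) - h a)"
    using convex_on_increment_le_secant[OF h I(1) I', of "t - a"] w True u by (simp add: w_def)
  moreover have "u / w + (t - a) / w = 1"
    using w by (simp add: w_def flip: add_divide_distrib)
  then have "u / w * D + (t - a) / w * D = D" for D
    by (metis distrib_right mult_1)
  ultimately show ?thesis
    by (smt (verit))
qed (use at in simp)

lemma convex_on_imp_deriv_mono: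
  fixes g :: "real \<Rightarrow> real"
  assumes g: "convex_on I g" "connected I" and rv: "r \<in> interior I" "v \<in> interior I" "r \<le> v"
    and g': "(g has_real_derivative g'r) (at r within I)" "(g has_real_derivative g'v) (at v within I)"
  shows "g'r \<le> g'v"
proof (cases "r = v")
  case True
  with g' show ?thesis using DERIV_unique at_within_interior rv by (metis order.refl)
next
  case False
  have "g v - g r \<ge> g'r * (v - r)"
    using rv interior_subset by (intro convex_on_imp_above_tangent[OF g _ _ g'(1)]) auto
  moreover have "g r - g v \<ge> g'v * (r - v)"
    using rv interior_subset by (intro convex_on_imp_above_tangent[OF g _ _ g'(2)]) auto
  ultimately have "(g'r - g'v) * (v - r) \<le> 0" by (simp add: algebra_simps)
  then show ?thesis using False rv by (simp add: mult_le_0_iff)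
qed

lemma epsi_bounds:
  fixes h h' h'' :: "real \<Rightarrow> real"
  assumes convex: "convex_on I h'" and I: "connected I" and mono: "mono_on I h'"
    and tv: "t \<in> I" "v \<in> interior I" "t < v"
    and h: "\<And>s. s \<in> I \<Longrightarrow> (h has_real_derivative h' s) (at s within I)"
    and h': "\<And>s. s \<in> I \<Longrightarrow> (h' has_real_derivative h'' s) (at s within I)"
  shows "0 \<le> epsi h h' t v" and "epsi h h' t v \<le> h'' v * (v - t)\<^sup>2 / 2"
proof -
  have tv_I: "{t..v} \<subseteq> I"
    using tv interior_subset by (intro connected_contains_Icc[OF I]) auto
  have between: "{t<..<v} \<subseteq> interior I"
    using tv_I by (intro interior_maximal) auto
  have h_cont: "continuous_on {t..v} h"
    using DERIV_continuous_on[OF h] tv_I by (rule continuous_on_subset)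
  have h_at: "(h has_real_derivative h' r) (at r)" if "r \<in> {t<..<v}" for r
    using h[of r] between that interior_subset at_within_interior by (metis subsetD)
  have "h t - h' t * t \<le> h v - h' t * v"
  proof (rule DERIV_nonneg_imp_increasing_open[OF less_imp_le[OF tv(3)]])
    fix r assume r: "t < r" "r < v"
    have "h' t \<le> h' r" using tv_I r by (intro mono_onD[OF mono]) auto
    moreover have "((\<lambda>r. h r - h' t * r) has_real_derivative h' r - h' t) (at r)"
      using r by (auto intro!: derivative_eq_intros h_at)
    ultimately show "\<exists>y. ((\<lambda>r. h r - h' t * r) has_real_derivative y) (at r) \<and> 0 \<le> y"
      by auto
  qed (intro continuous_intros h_cont)
  then show "0 \<le> epsi h h' t v" by (simp add: epsi_def algebra_simps)
  have "h v - h' t * v - h'' v * (v - t)\<^sup>2 / 2 \<le> h t - h' t * t - h'' v * (t - t)\<^sup>2 / 2"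
  proof (rule DERIV_nonpos_imp_decreasing_open[OF less_imp_le[OF tv(3)]])
    fix r assume r: "t < r" "r < v"
    have r_int: "r \<in> interior I" using between r by auto
    have "h' t - h' r \<ge> h'' r * (t - r)"
      using tv_I r by (intro convex_on_imp_above_tangent[OF convex I r_int _ h']) auto
    then have "h' r - h' t \<le> h'' r * (r - t)" by (simp add: algebra_simps)
    also have "\<dots> \<le> h'' v * (r - t)"
      using tv_I r tv by (intro mult_right_mono convex_on_imp_deriv_mono[OF convex I r_int tv(2) _ h' h']) auto
    finally have "h' r - h' t - h'' v * (r - t) \<le> 0" by simp
    moreover have "((\<lambda>r. h r - h' t * r - h'' v * (r - t)\<^sup>2 / 2) has_real_derivative
        h' r - h' t - h'' v * (r - t)) (at r)"
      using r by (auto intro!: derivative_eq_intros h_at)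
    ultimately show "\<exists>y. ((\<lambda>r. h r - h' t * r - h'' v * (r - t)\<^sup>2 / 2) has_real_derivative y) (at r) \<and> y \<le> 0"
      by auto
  qed (auto intro!: continuous_intros h_cont)
  then show "epsi h h' t v \<le> h'' v * (v - t)\<^sup>2 / 2" by (simp add: epsi_def algebra_simps)
qed

lemma norm_Ef_le_comparison:
  fixes f :: "'a::banach \<Rightarrow> 'b::banach" and f' :: "'a \<Rightarrow> 'a \<Rightarrow>\<^sub>L 'b" and \<phi> \<phi>' :: "real \<Rightarrow> real"
  assumes f: "\<And>z. z \<in> closed_segment x y \<Longrightarrow> (f has_derivative blinfun_apply (f' z)) (at z)"
    and \<phi>: "continuous_on {0..1} \<phi>" "\<And>\<tau>. 0 < \<tau> \<Longrightarrow> \<tau> < 1 \<Longrightarrow> (\<phi> has_real_derivative \<phi>' \<tau>) (at \<tau>)"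
    and bound: "\<And>\<tau>. 0 < \<tau> \<Longrightarrow> \<tau> < 1 \<Longrightarrow>
      norm (blinfun_apply (f' (x + \<tau> *\<^sub>R (y - x)) - f' x) (y - x)) \<le> \<phi>' \<tau>"
  shows "norm (Ef f f' x y) \<le> \<phi> 1 - \<phi> 0"
proof -
  define g where "g \<tau> = f (x + \<tau> *\<^sub>R (y - x)) - \<tau> *\<^sub>R blinfun_apply (f' x) (y - x)" for \<tau>
  define G where "G \<tau> = blinfun_apply (f' (x + \<tau> *\<^sub>R (y - x)) - f' x) (y - x)" for \<tau>
  have g_deriv: "(g has_vector_derivative G \<tau>) (at \<tau>)" if "\<tau> \<in> {0..1}" for \<tau>
  proof -
    have "x + \<tau> *\<^sub>R (y - x) \<in> closed_segment x y"
      using that by (auto simp: closed_segment_def algebra_simps intro!: exI[of _ \<tau>])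
    then have "((\<lambda>\<tau>. f (x + \<tau> *\<^sub>R (y - x))) has_derivative
        (\<lambda>h. blinfun_apply (f' (x + \<tau> *\<^sub>R (y - x))) (h *\<^sub>R (y - x)))) (at \<tau>)"
      by (intro diff_chain_at[OF _ f, unfolded o_def]) (auto intro!: derivative_eq_intros)
    then have "((\<lambda>\<tau>. f (x + \<tau> *\<^sub>R (y - x))) has_vector_derivative
        blinfun_apply (f' (x + \<tau> *\<^sub>R (y - x))) (y - x)) (at \<tau>)"
      by (simp add: has_vector_derivative_def blinfun.scaleR_right)
    then show ?thesis
      unfolding g_def G_def blinfun.diff_left
      by (auto intro!: derivative_eq_intros)
  qed
  have "continuous_on {0..1} g"
    by (intro continuous_at_imp_continuous_on ballI has_vector_derivative_continuous[OF g_deriv])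
  then have "norm (g 1 - g 0) \<le> \<phi> 1 - \<phi> 0"
    using g_deriv \<phi> bound unfolding G_def
    by (intro differentiable_bound_general[OF zero_less_one _ \<phi>(1)])
       (auto simp: has_real_derivative_iff_has_vector_derivative)
  moreover have "g 1 - g 0 = Ef f f' x y" by (simp add: g_def Ef_def algebra_simps)
  ultimately show ?thesis by simp
qed

lemma Ef_bound_by_majorant:
  fixes f :: "'a::banach \<Rightarrow> 'b::banach" and f' :: "'a \<Rightarrow> 'a \<Rightarrow>\<^sub>L 'b" and \<psi> \<psi>' :: "real \<Rightarrow> real"
  assumes S: "convex S" "x \<in> S" "y \<in> S"
    and f: "\<And>z. z \<in> S \<Longrightarrow> (f has_derivative blinfun_apply (f' z)) (at z)"
    and majorant: "\<And>q. q \<in> S \<Longrightarrow> norm (q - x) + norm (x - x0) < R \<Longrightarrow>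
        lam * norm (f' q - f' x) \<le> \<psi>' (norm (q - x) + norm (x - x0)) - \<psi>' (norm (x - x0))"
    and \<psi>: "\<And>s. s \<in> {0..<R} \<Longrightarrow> (\<psi> has_real_derivative \<psi>' s) (at s within {0..<R})"
    and \<psi>'_convex: "convex_on {0..<R} \<psi>'"
    and lam: "lam > 0"
    and tv: "0 \<le> t" "t < v" "v < R"
    and x: "norm (x - x0) \<le> t" and y: "norm (y - x) \<le> v - t"
  shows "lam * norm (Ef f f' x y) \<le> epsi \<psi> \<psi>' t v * (norm (y - x))\<^sup>2 / (v - t)\<^sup>2"
proof -
  define a b s where "a = norm (x - x0)" and "b = norm (y - x)" and "s = v - t"
  define c where "c = b / s"
  define \<phi> where "\<phi> \<tau> = c\<^sup>2 / lam * (\<psi> (t + \<tau> * s) - \<tau> * s * \<psi>' t)" for \<tau>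
  define \<phi>' where "\<phi>' \<tau> = c\<^sup>2 / lam * s * (\<psi>' (t + \<tau> * s) - \<psi>' t)" for \<tau>
  have s: "s > 0" and bs: "0 \<le> b" "b \<le> s" and bcs: "b = c * s"
    using tv y by (auto simp: s_def b_def c_def)
  have \<psi>_at: "(\<psi> has_real_derivative \<psi>' r) (at r)" if "0 < r" "r < R" for r
    using \<psi>[of r] that at_within_interior[of r "{0..<R}"] by auto
  have \<tau>s: "0 \<le> \<tau> * s" "\<tau> * s \<le> s" if "\<tau> \<in> {0..1}" for \<tau>
    using that s by (auto intro: mult_left_le_one_le)
  have \<phi>_cont: "continuous_on {0..1} \<phi>"
  proof -
    have "t + \<tau> * s \<in> {0..<R}" if "\<tau> \<in> {0..1}" for \<tau>
      using \<tau>s[OF that] tv s_def unfolding atLeastLessThan_iff by linarith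
    then have "continuous_on {0..1} (\<lambda>\<tau>. \<psi> (t + \<tau> * s))"
      by (intro continuous_on_compose2[OF DERIV_continuous_on[OF \<psi>]]) (auto intro!: continuous_intros)
    then show ?thesis
      unfolding \<phi>_def by (intro continuous_intros)
  qed
  have \<phi>_deriv: "(\<phi> has_real_derivative \<phi>' \<tau>) (at \<tau>)" if "0 < \<tau>" "\<tau> < 1" for \<tau>
  proof -
    have "0 < \<tau> * s" "\<tau> * s \<le> s" using that s \<tau>s[of \<tau>] by auto
    then have "0 < t + \<tau> * s" "t + \<tau> * s < R"
      using tv s_def by linarith+
    then have "((\<lambda>\<tau>. \<psi> (t + \<tau> * s)) has_real_derivative \<psi>' (t + \<tau> * s) * s) (at \<tau>)"
      by (intro DERIV_chain2[OF \<psi>_at]) (auto intro!: derivative_eq_intros)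
    then show ?thesis
      unfolding \<phi>_def \<phi>'_def using lam
      by (auto intro!: derivative_eq_intros simp: field_simps)
  qed
  have bound: "norm (blinfun_apply (f' (x + \<tau> *\<^sub>R (y - x)) - f' x) (y - x)) \<le> \<phi>' \<tau>"
    if "0 < \<tau>" "\<tau> < 1" for \<tau>
  proof -
    define q where "q = x + \<tau> *\<^sub>R (y - x)"
    have "(1 - \<tau>) *\<^sub>R x + \<tau> *\<^sub>R y \<in> S" using that by (intro convexD[OF S]) auto
    then have q: "q \<in> S" by (simp add: q_def algebra_simps)
    have q_norm: "norm (q - x) = \<tau> * b" using that by (simp add: q_def b_def)
    have \<tau>bs: "\<tau> * b \<le> \<tau> * s" "\<tau> * s \<le> s" "0 < \<tau> * s"
      using that bs s by (auto intro: mult_left_le_one_le)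
    have tR: "t + \<tau> * b < R" "t + \<tau> * s < R" using \<tau>bs tv s_def by linarith+
    have "lam * norm (f' q - f' x) \<le> \<psi>' (a + \<tau> * b) - \<psi>' a"
    proof -
      have "\<tau> * b + a < R" using \<tau>bs x tv unfolding a_def s_def by linarith
      then show ?thesis using majorant[OF q] q_norm by (simp add: a_def add.commute)
    qed
    also have "\<dots> \<le> \<psi>' (t + \<tau> * b) - \<psi>' t"
      using x tv \<tau>bs bs that tR
      by (intro convex_on_increment_mono[OF \<psi>'_convex]) (auto simp: a_def s_def)
    also have "\<dots> \<le> \<tau> * b / (\<tau> * s) * (\<psi>' (t + \<tau> * s) - \<psi>' t)"
      using tv \<tau>bs bs that tR
      by (intro convex_on_increment_le_secant[OF \<psi>'_convex]) (auto simp: s_def)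
    also have "\<tau> * b / (\<tau> * s) = c" using that by (simp add: c_def)
    finally have "lam * norm (f' q - f' x) * b \<le> c * (\<psi>' (t + \<tau> * s) - \<psi>' t) * b"
      using bs(1) by (rule mult_right_mono)
    also have "\<dots> = lam * \<phi>' \<tau>"
      using lam by (simp add: \<phi>'_def bcs power2_eq_square)
    finally have "norm (f' q - f' x) * b \<le> \<phi>' \<tau>"
      using lam by (simp add: mult.assoc)
    then show ?thesis
      using norm_blinfun[of "f' q - f' x" "y - x"] by (simp add: q_def b_def)
  qed
  have "norm (Ef f f' x y) \<le> \<phi> 1 - \<phi> 0"
    using closed_segment_subset[OF S(2,3,1)] f \<phi>_cont \<phi>_deriv bound
    by (intro norm_Ef_le_comparison) auto
  also have "\<phi> 1 - \<phi> 0 = c\<^sup>2 / lam * epsi \<psi> \<psi>' t v"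
    unfolding \<phi>_def epsi_def s_def by (simp add: diff_divide_distrib [symmetric] algebra_simps)
  finally have "lam * norm (Ef f f' x y) \<le> lam * (c\<^sup>2 / lam * epsi \<psi> \<psi>' t v)"
    using lam by (intro mult_left_mono) auto
  then show ?thesis
    using lam by (simp add: c_def b_def s_def power_divide mult.commute)
qed

lemma ball_subset_of_Sup_radii:
  fixes x0 :: "'a::real_normed_vector"
  assumes "R > 0"
  shows "ball x0 (Sup {s \<in> {0..<R}. ball x0 s \<subseteq> \<Omega>}) \<subseteq> \<Omega>"
proof
  fix z assume z: "z \<in> ball x0 (Sup {s \<in> {0..<R}. ball x0 s \<subseteq> \<Omega>})"
  have "{s \<in> {0..<R}. ball x0 s \<subseteq> \<Omega>} \<noteq> {}" using assms by (auto intro!: exI[of _ 0])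
  moreover have "bdd_above {s \<in> {0..<R}. ball x0 s \<subseteq> \<Omega>}" by (auto intro!: bdd_aboveI[of _ R])
  ultimately obtain s where "s \<in> {0..<R}" "ball x0 s \<subseteq> \<Omega>" "dist x0 z < s"
    using z by (auto simp: less_cSup_iff)
  then show "z \<in> \<Omega>" by auto
qed

theorem lemma3p6:
  fixes f :: "'a::banach \<Rightarrow> 'b::banach" and f' :: "'a \<Rightarrow> 'a \<Rightarrow>\<^sub>L 'b"
    and F :: "'a \<Rightarrow> 'b set" and \<Omega> :: "'a set"
    and x0 x1 x y :: 'a and lam \<rho>1 \<rho>2 r_x1 r0 r_x0 R \<kappa> tstar t v :: real
    and \<psi> \<psi>' \<psi>'' :: "real \<Rightarrow> real"
  assumes \<Omega>_open: "open \<Omega>"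
    and f_cont: "continuous_on \<Omega> f"
    and f_deriv: "\<And>z. z \<in> \<Omega> \<Longrightarrow> (f has_derivative blinfun_apply (f' z)) (at z)"
    and f'_cont: "continuous_on \<Omega> f'"
    and F_closed: "closed {(p, q). q \<in> F p}"
    and x0_in: "x0 \<in> \<Omega>" and x1_in: "x1 \<in> \<Omega>"
    and lam_pos: "lam > 0"
    and x1_sol: "x1 \<in> Lf_inv f f' F x0 0"
    and strong_reg: "\<rho>1 > 0" "\<rho>2 > 0" "ball x1 \<rho>1 \<subseteq> \<Omega>"
      "\<exists>g. (\<forall>z\<in>ball 0 \<rho>2. Lf_inv f f' F x0 z \<inter> ball x1 \<rho>1 = {g z})
           \<and> lam-lipschitz_on (ball 0 \<rho>2) g"
    and radii_pos: "r_x1 > 0" "r0 > 0" "r_x0 > 0"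
    and radii: "\<And>z. z \<in> ball x0 r_x0 \<Longrightarrow>
        lam * norm (f' z - f' x0) < 1 \<and>
        (\<exists>g. (\<forall>w\<in>ball 0 r0. Lf_inv f f' F z w \<inter> ball x1 r_x1 = {g w})
             \<and> (lam / (1 - lam * norm (f' z - f' x0)))-lipschitz_on (ball 0 r0) g)"
    and R_pos: "R > 0"
    and \<kappa>_def: "\<kappa> = Sup {s \<in> {0..<R}. ball x0 s \<subseteq> \<Omega>}"
    and \<psi>_deriv: "\<And>s. s \<in> {0..<R} \<Longrightarrow> (\<psi> has_real_derivative \<psi>' s) (at s within {0..<R})"
    and \<psi>'_deriv: "\<And>s. s \<in> {0..<R} \<Longrightarrow> (\<psi>' has_real_derivative \<psi>'' s) (at s within {0..<R})"
    and \<psi>''_cont: "continuous_on {0..<R} \<psi>''"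
    and majorant: "\<And>p q. p \<in> ball x0 \<kappa> \<Longrightarrow> q \<in> ball x0 \<kappa> \<Longrightarrow> norm (q - p) + norm (p - x0) < R \<Longrightarrow>
        lam * norm (f' q - f' p) \<le> \<psi>' (norm (q - p) + norm (p - x0)) - \<psi>' (norm (p - x0))"
    and init: "norm (x1 - x0) \<le> \<psi> 0"
    and \<psi>0_pos: "\<psi> 0 > 0" and \<psi>'0: "\<psi>' 0 = -1"
    and \<psi>'_convex: "convex_on {0..<R} \<psi>'"
    and \<psi>'_strict_mono: "strict_mono_on {0..<R} \<psi>'"
    and \<psi>_zero: "\<exists>s\<in>{0<..<R}. \<psi> s = 0"
    and tstar_def: "tstar \<in> {0..<R}" "\<psi> tstar = 0" "\<And>s. s \<in> {0..<R} \<Longrightarrow> \<psi> s = 0 \<Longrightarrow> tstar \<le> s"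
    and tstar_le: "tstar \<le> r_x0"
    and tstar_r0: "\<psi>'' tstar * (\<psi> 0)\<^sup>2 / (2 * lam) < r0"
    and xy_in: "x \<in> ball x0 \<kappa>" "y \<in> ball x0 \<kappa>"
    and tv: "0 \<le> t" "t < v" "v < R"
    and x_le: "norm (x - x0) \<le> t"
    and yx_le: "norm (y - x) \<le> v - t"
  shows "lam * norm (Ef f f' x y) \<le> epsi \<psi> \<psi>' t v * (norm (y - x))\<^sup>2 / (v - t)\<^sup>2
       \<and> epsi \<psi> \<psi>' t v * (norm (y - x))\<^sup>2 / (v - t)\<^sup>2 \<le> \<psi>'' v * (v - t)\<^sup>2 / 2"
proof
  have ball: "ball x0 \<kappa> \<subseteq> \<Omega>"
    unfolding \<kappa>_def using R_pos by (rule ball_subset_of_Sup_radii)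
  show "lam * norm (Ef f f' x y) \<le> epsi \<psi> \<psi>' t v * (norm (y - x))\<^sup>2 / (v - t)\<^sup>2"
    using ball f_deriv majorant[OF xy_in(1)]
    by (intro Ef_bound_by_majorant[OF convex_ball xy_in _ _ \<psi>_deriv \<psi>'_convex lam_pos tv x_le yx_le])
      auto
  have "interior {0..<R} = {0<..<R}" by (simp add: interior_atLeastLessThan)
  then have "0 \<le> epsi \<psi> \<psi>' t v" "epsi \<psi> \<psi>' t v \<le> \<psi>'' v * (v - t)\<^sup>2 / 2"
    using strict_mono_on_imp_mono_on[OF \<psi>'_strict_mono] tv \<psi>_deriv \<psi>'_deriv
    by (intro epsi_bounds[OF \<psi>'_convex]; force simp: is_interval_connected is_interval_co)+
  moreover have "(norm (y - x))\<^sup>2 / (v - t)\<^sup>2 \<le> 1"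
    using yx_le tv by (simp add: power_mono)
  ultimately show "epsi \<psi> \<psi>' t v * (norm (y - x))\<^sup>2 / (v - t)\<^sup>2 \<le> \<psi>'' v * (v - t)\<^sup>2 / 2"
    by (smt (verit) mult_left_le times_divide_eq_right)
qed

end
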